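(* The space $\mathtt{CA}$ with the pointwise topology has the following properties: (1) it is countable; (2) it is Hausdorff; (3) it is not compact; (4) it is perfect (has no isolated points); (5) it is totally disconnected; (6) it is of first category; (7) no point has a countable neighborhood basis (so the space is not first-countable, hence neither metrizable nor second-countable); (8) it is normal; (9) it is not sequential.
   Context: $\Sigma$ is a finite alphabet with $|\Sigma|\ge 2$, and $\Sigma^\mathbb{Z}$ carries the product (Cantor) topology. The shift $\sigma$ is $\sigma(x)_i=x_{i+1}$. A cellular automaton (CA) is a continuous map $c:\Sigma^\mathbb{Z}\to\Sigma^\mathbb{Z}$ with $c\circ\sigma=\sigma\circ c$; $\mathtt{CA}$ is the set of all CA. The pointwise topology on $\mathtt{CA}$ is generated by the subbase $U_x(a)=\{c\in\mathtt{CA}\mid c(x)_0=a\}$, $x\in\Sigma^\mathbb{Z}$, $a\in\Sigma$. A space is sequential if its sequentially closed subsets (those containing the limits of all their convergent sequences) are exactly its closed subsets; it is of first category if it is a countable union of nowhere dense sets. *)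

theory Defs
  imports "HOL-Analysis.Analysis" "HOL-Library.Countable_Set"
begin

definition cantor_top :: "(int \<Rightarrow> 'a) topology" where
  "cantor_top = product_topology (\<lambda>_::int. discrete_topology (UNIV :: 'a set)) UNIV"

definition shift :: "(int \<Rightarrow> 'a) \<Rightarrow> (int \<Rightarrow> 'a)" where
  "shift x = (\<lambda>i. x (i + 1))"

definition CA :: "((int \<Rightarrow> 'a) \<Rightarrow> (int \<Rightarrow> 'a)) set" where
  "CA = {c. continuous_map cantor_top cantor_top c \<and> c \<circ> shift = shift \<circ> c}"

definition U_sub :: "(int \<Rightarrow> 'a) \<Rightarrow> 'a \<Rightarrow> ((int \<Rightarrow> 'a) \<Rightarrow> (int \<Rightarrow> 'a)) set" where
  "U_sub x a = {c \<in> CA. c x 0 = a}"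

definition pointwise_top :: "((int \<Rightarrow> 'a) \<Rightarrow> (int \<Rightarrow> 'a)) topology" where
  "pointwise_top = topology_generated_by {U_sub x a | x a. True}"

definition no_isolated_points :: "'b topology \<Rightarrow> bool" where
  "no_isolated_points X \<longleftrightarrow> (\<forall>p \<in> topspace X. \<not> openin X {p})"

definition totally_disconnected_space :: "'b topology \<Rightarrow> bool" where
  "totally_disconnected_space X \<longleftrightarrow>
     (\<forall>S. S \<subseteq> topspace X \<and> connectedin X S \<longrightarrow> (\<exists>a. S \<subseteq> {a}))"

definition nowhere_dense_in :: "'b topology \<Rightarrow> 'b set \<Rightarrow> bool" where
  "nowhere_dense_in X S \<longleftrightarrow> S \<subseteq> topspace X \<and> X interior_of (X closure_of S) = {}"

definition first_category :: "'b topology \<Rightarrow> bool" where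
  "first_category X \<longleftrightarrow>
     (\<exists>F. countable F \<and> (\<forall>S \<in> F. nowhere_dense_in X S) \<and> \<Union>F = topspace X)"

definition countable_nbhd_basis_at :: "'b topology \<Rightarrow> 'b \<Rightarrow> bool" where
  "countable_nbhd_basis_at X p \<longleftrightarrow>
     (\<exists>B. countable B \<and> (\<forall>N \<in> B. N \<subseteq> topspace X \<and> p \<in> X interior_of N) \<and>
          (\<forall>V. V \<subseteq> topspace X \<and> p \<in> X interior_of V \<longrightarrow> (\<exists>N \<in> B. N \<subseteq> V)))"

definition sequentially_closedin :: "'b topology \<Rightarrow> 'b set \<Rightarrow> bool" where
  "sequentially_closedin X S \<longleftrightarrow> S \<subseteq> topspace X \<and>
     (\<forall>s l. (\<forall>n. s n \<in> S) \<and> limitin X s l sequentially \<longrightarrow> l \<in> S)"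

definition sequential_space :: "'b topology \<Rightarrow> bool" where
  "sequential_space X \<longleftrightarrow> (\<forall>S. sequentially_closedin X S \<longleftrightarrow> closedin X S)"

end

theory Submission
  imports Defs "HOL-Probability.Probability_Mass_Function" "HOL-Probability.Infinite_Product_Measure"
begin

text \<open>
  The argument rests on three facts.  (i) Every cellular automaton is determined by a local rule at
  coordinate 0 that reads a finite window (compactness of Cantor space), so CA is countable.
  (ii) The basic neighbourhoods, which fix the value at coordinate 0 on finitely many configurations,
  are clopen; hence the space is Hausdorff, totally disconnected and zero-dimensional, thus regular,
  and being countable it is Lindelof and therefore normal.  (iii) An automaton can be modified on a
  cylinder while keeping its values on any prescribed finite set of configurations.  Since the set of
  configurations is uncountable, a diagonal argument then shows that no point has a countable
  neighbourhood basis, which gives perfectness, first category, non-compactness (Baire) and the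
  failure of first countability.  Finally, measuring with the Bernoulli measure how often an
  automaton disagrees with the identity produces a sequentially closed set that is not closed.
\<close>

text \<open>A space in which any two distinct points are separated by a clopen set is Hausdorff
  (separate by the set and its complement) and totally disconnected (a connected set cannot be split
  by a clopen set).\<close>

lemma Hausdorff_space_if_clopen_separated:
  assumes "\<And>x y. x \<in> topspace X \<Longrightarrow> y \<in> topspace X \<Longrightarrow> x \<noteq> y \<Longrightarrow>
             \<exists>U. openin X U \<and> closedin X U \<and> x \<in> U \<and> y \<notin> U"
  shows "Hausdorff_space X"
  unfolding Hausdorff_space_def
proof (intro allI impI)
  fix x y assume xy: "x \<in> topspace X \<and> y \<in> topspace X \<and> x \<noteq> y"
  then obtain U where U: "openin X U" "closedin X U" "x \<in> U" "y \<notin> U"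
    using assms by blast
  have "openin X (topspace X - U)" using U(2) by (simp add: openin_diff)
  then show "\<exists>U V. openin X U \<and> openin X V \<and> x \<in> U \<and> y \<in> V \<and> disjnt U V"
    using U xy by (intro exI[of _ U] exI[of _ "topspace X - U"]) (auto simp: disjnt_def)
qed

lemma totally_disconnected_if_clopen_separated:
  assumes "\<And>x y. x \<in> topspace X \<Longrightarrow> y \<in> topspace X \<Longrightarrow> x \<noteq> y \<Longrightarrow>
             \<exists>U. openin X U \<and> closedin X U \<and> x \<in> U \<and> y \<notin> U"
  shows "totally_disconnected_space X"
  unfolding totally_disconnected_space_def
proof (intro allI impI)
  fix S assume S: "S \<subseteq> topspace X \<and> connectedin X S"
  have "x = y" if "x \<in> S" "y \<in> S" for x y
  proof (rule ccontr)
    assume "x \<noteq> y"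
    moreover have "x \<in> topspace X" "y \<in> topspace X" using S that by auto
    ultimately obtain U where U: "openin X U" "closedin X U" "x \<in> U" "y \<notin> U"
      using assms by blast
    then have "S \<subseteq> U \<or> disjnt S U" using S connectedin_clopen_cases by blast
    then show False using U that by (auto simp: disjnt_def)
  qed
  then show "\<exists>a. S \<subseteq> {a}" by blast
qed

text \<open>Since no cellular automaton has a countable neighbourhood basis, these yield perfectness and the
  failure of first countability.\<close>

lemma countable_nbhd_basis_if_isolated:
  assumes "openin X {p}"
  shows "countable_nbhd_basis_at X p"
  unfolding countable_nbhd_basis_at_def
proof (intro exI[of _ "{{p}}"] conjI)
  show "\<forall>N\<in>{{p}}. N \<subseteq> topspace X \<and> p \<in> X interior_of N"
    using assms openin_subset by (fastforce simp: interior_of_openin)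
  show "\<forall>V. V \<subseteq> topspace X \<and> p \<in> X interior_of V \<longrightarrow> (\<exists>N\<in>{{p}}. N \<subseteq> V)"
    using interior_of_subset by fastforce
qed simp

lemma countable_nbhd_basis_if_first_countable:
  assumes "first_countable X" "p \<in> topspace X"
  shows "countable_nbhd_basis_at X p"
proof -
  obtain \<B> where \<B>: "countable \<B>" "\<And>V. V \<in> \<B> \<Longrightarrow> openin X V"
    "\<And>U. openin X U \<Longrightarrow> p \<in> U \<Longrightarrow> \<exists>V\<in>\<B>. p \<in> V \<and> V \<subseteq> U"
    using assms unfolding first_countable_def by metis
  show ?thesis
    unfolding countable_nbhd_basis_at_def
  proof (intro exI[of _ "{V \<in> \<B>. p \<in> V}"] conjI allI impI)
    show "countable {V \<in> \<B>. p \<in> V}" using \<B>(1) by simp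
    show "\<forall>N\<in>{V \<in> \<B>. p \<in> V}. N \<subseteq> topspace X \<and> p \<in> X interior_of N"
      using \<B>(2) openin_subset by (fastforce simp: interior_of_openin)
    fix V assume "V \<subseteq> topspace X \<and> p \<in> X interior_of V"
    then obtain W where "W \<in> \<B>" "p \<in> W" "W \<subseteq> X interior_of V"
      using \<B>(3)[OF openin_interior_of] by blast
    then show "\<exists>N\<in>{V \<in> \<B>. p \<in> V}. N \<subseteq> V" using interior_of_subset[of X V] by blast
  qed
qed

text \<open>Hence a countable perfect T1 space
  is the countable union of the nowhere dense singletons, and by the Baire category theorem a
  nonempty countable perfect Hausdorff space cannot be compact.\<close>

lemma interior_of_singleton_if_perfect:
  assumes "no_isolated_points X"
  shows "X interior_of {p} = {}"
proof (rule ccontr)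
  assume "X interior_of {p} \<noteq> {}"
  then have "X interior_of {p} = {p}" using interior_of_subset[of X "{p}"] by blast
  then show False
    using assms openin_interior_of[of X "{p}"] openin_subset
    unfolding no_isolated_points_def by fastforce
qed

lemma first_category_if_countable_perfect:
  assumes "countable (topspace X)" "t1_space X" "no_isolated_points X"
  shows "first_category X"
  unfolding first_category_def
proof (intro exI[of _ "(\<lambda>p. {p}) ` topspace X"] conjI ballI)
  fix S assume "S \<in> (\<lambda>p. {p}) ` topspace X"
  then obtain p where p: "p \<in> topspace X" "S = {p}" by blast
  then have "X closure_of S = S"
    using assms(2) by (simp add: closure_of_closedin t1_space_closedin_singleton)
  then show "nowhere_dense_in X S"
    using p interior_of_singleton_if_perfect[OF assms(3)] by (simp add: nowhere_dense_in_def)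
qed (use assms(1) in auto)

lemma not_compact_if_countable_perfect:
  assumes "countable (topspace X)" "Hausdorff_space X" "no_isolated_points X"
    and "topspace X \<noteq> {}"
  shows "\<not> compact_space X"
proof
  assume "compact_space X"
  then have lc_regular: "locally_compact_space X \<and> regular_space X"
    using assms(2) compact_imp_locally_compact_space compact_Hausdorff_imp_regular_space by blast
  have "X interior_of \<Union>((\<lambda>p. {p}) ` topspace X) = {}"
  proof (rule Baire_category_alt)
    show "completely_metrizable_space X \<or> locally_compact_space X \<and> regular_space X"
      using lc_regular by blast
    show "countable ((\<lambda>p. {p}) ` topspace X)" using assms(1) by simp
    fix T assume "T \<in> (\<lambda>p. {p}) ` topspace X"
    then show "closedin X T \<and> X interior_of T = {}"
      using assms(2,3) Hausdorff_imp_t1_space interior_of_singleton_if_perfect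
      by (fastforce simp: t1_space_closedin_singleton)
  qed
  then show False using assms(4) by simp
qed

section \<open>Cantor space and finite windows\<close>

definition cyl :: "int set \<Rightarrow> (int \<Rightarrow> 'a) \<Rightarrow> (int \<Rightarrow> 'a) set" where
  "cyl J w = {x. \<forall>j\<in>J. x j = w j}"

definition depends_only_on :: "int set \<Rightarrow> ((int \<Rightarrow> 'a) \<Rightarrow> 'b) \<Rightarrow> bool" where
  "depends_only_on J h \<longleftrightarrow> (\<forall>y z. (\<forall>j\<in>J. y j = z j) \<longrightarrow> h y = h z)"

definition window :: "int set \<Rightarrow> (int \<Rightarrow> 'a) \<Rightarrow> (int \<Rightarrow> 'a)" where
  "window J y = (\<lambda>j. if j \<in> J then y j else undefined)"

lemma depends_only_on_window: "depends_only_on J h \<Longrightarrow> h (window J y) = h y"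
  by (simp add: depends_only_on_def window_def)

lemma depends_only_on_Un:
  "depends_only_on J g \<Longrightarrow> depends_only_on K h \<Longrightarrow> depends_only_on (J \<union> K) (\<lambda>y. F (g y) (h y))"
  unfolding depends_only_on_def by (metis UnCI)

lemma window_in_cyl: "y \<in> cyl J (window J y)"
  by (simp add: cyl_def window_def)

lemma finite_range_window:
  assumes "finite J" shows "finite (range (window J :: (int \<Rightarrow> 'a::finite) \<Rightarrow> _))"
proof (rule finite_subset)
  show "range (window J) \<subseteq> {t::int \<Rightarrow> 'a. \<forall>i. (i \<in> J \<longrightarrow> t i \<in> UNIV) \<and> (i \<notin> J \<longrightarrow> t i = undefined)}"
    by (auto simp: window_def)
  show "finite {t::int \<Rightarrow> 'a. \<forall>i. (i \<in> J \<longrightarrow> t i \<in> UNIV) \<and> (i \<notin> J \<longrightarrow> t i = undefined)}"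
    using assms by (intro finite_set_of_finite_funs) auto
qed

lemma topspace_cantor [simp]: "topspace cantor_top = UNIV"
  by (simp add: cantor_top_def)

lemma compact_space_cantor: "compact_space (cantor_top :: (int \<Rightarrow> 'a::finite) topology)"
  unfolding cantor_top_def compact_space_product_topology compact_space_discrete_topology by simp

lemma locally_constant_if_continuous:
  assumes "continuous_map cantor_top (discrete_topology UNIV) (h :: (int \<Rightarrow> 'a) \<Rightarrow> 'b)"
  shows "\<exists>J. finite J \<and> (\<forall>z \<in> cyl J y. h z = h y)"
proof -
  have "\<forall>U. openin cantor_top {z. h z \<in> U}"
    using assms unfolding continuous_map_def by simp
  then have "openin cantor_top {z. h z \<in> {h y}}" by blast
  then obtain U where U: "finite {i. U i \<noteq> UNIV}" "y \<in> Pi\<^sub>E UNIV U"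
    "Pi\<^sub>E UNIV U \<subseteq> {z. h z = h y}"
    unfolding cantor_top_def openin_product_topology_alt by auto
  have "h z = h y" if "z \<in> cyl {i. U i \<noteq> UNIV} y" for z
  proof -
    have "z i \<in> U i" for i
      using that U(2) by (cases "U i = UNIV") (auto simp: cyl_def PiE_UNIV_domain)
    then show ?thesis using U(3) by (auto simp: PiE_UNIV_domain)
  qed
  then show ?thesis using U(1) by blast
qed

lemma cyl_eq_PiE: "cyl J y = Pi\<^sub>E UNIV (\<lambda>i. if i \<in> J then {y i} else UNIV)"
proof (intro set_eqI iffI)
  fix x assume "x \<in> Pi\<^sub>E UNIV (\<lambda>i. if i \<in> J then {y i} else UNIV)"
  then have "x j = y j" if "j \<in> J" for j
    using that by (simp add: PiE_UNIV_domain Pi_iff) (metis singletonD)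
  then show "x \<in> cyl J y" by (simp add: cyl_def)
qed (simp add: cyl_def PiE_UNIV_domain Pi_iff)

lemma continuous_if_locally_constant:
  assumes loc: "\<And>y. \<exists>J. finite J \<and> (\<forall>z \<in> cyl J y. h z = h y)"
  shows "continuous_map cantor_top (discrete_topology UNIV) (h :: (int \<Rightarrow> 'a) \<Rightarrow> 'b)"
proof -
  have "openin (product_topology (\<lambda>_. discrete_topology UNIV) UNIV) {x. h x \<in> A}" for A
    unfolding openin_product_topology_alt
  proof
    fix y assume y: "y \<in> {x. h x \<in> A}"
    obtain J where J: "finite J" "\<forall>z \<in> cyl J y. h z = h y" using loc by blast
    define U where "U = (\<lambda>i. if i \<in> J then {y i} else UNIV)"
    have "Pi\<^sub>E UNIV U = cyl J y" by (simp add: U_def cyl_eq_PiE)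
    moreover have "finite {i. U i \<noteq> UNIV}" by (rule finite_subset[OF _ J(1)]) (auto simp: U_def)
    moreover have "y \<in> cyl J y" by (simp add: cyl_def)
    moreover have "cyl J y \<subseteq> {x. h x \<in> A}" using J(2) y by auto
    ultimately show "\<exists>U. finite {i \<in> UNIV. U i \<noteq> topspace (discrete_topology UNIV)} \<and>
        (\<forall>i\<in>UNIV. openin (discrete_topology UNIV) (U i)) \<and> y \<in> Pi\<^sub>E UNIV U \<and>
        Pi\<^sub>E UNIV U \<subseteq> {x. h x \<in> A}"
      by (intro exI[of _ U]) simp
  qed
  then show ?thesis by (simp add: continuous_map_def cantor_top_def)
qed

text \<open>Cylinders are open; together with compactness of Cantor space this turns local constancy
  into dependence on a single finite window (uniform continuity).\<close>

lemma openin_cyl: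
  assumes "finite J" shows "openin cantor_top (cyl J w)"
proof -
  have "continuous_map cantor_top (discrete_topology UNIV) (\<lambda>z. z \<in> cyl J w)"
    using assms by (intro continuous_if_locally_constant) (auto simp: cyl_def)
  then have "\<forall>U. openin cantor_top {z. (z \<in> cyl J w) \<in> U}"
    unfolding continuous_map_def by simp
  then have "openin cantor_top {z. (z \<in> cyl J w) \<in> {True}}" by blast
  then show ?thesis by simp
qed

lemma uniform_window:
  assumes "continuous_map cantor_top (discrete_topology UNIV) (h :: (int \<Rightarrow> 'a::finite) \<Rightarrow> 'b)"
  shows "\<exists>J. finite J \<and> depends_only_on J h"
proof -
  obtain W where W: "\<And>y. finite (W y)" "\<And>y z. z \<in> cyl (W y) y \<Longrightarrow> h z = h y"
    using locally_constant_if_continuous[OF assms] by metis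
  have "compactin cantor_top (UNIV :: (int \<Rightarrow> 'a) set)"
    using compact_space_cantor unfolding compact_space_def by simp
  moreover have "\<forall>U \<in> range (\<lambda>y. cyl (W y) y). openin cantor_top U"
    using openin_cyl W(1) by blast
  moreover have "UNIV \<subseteq> (\<Union>y. cyl (W y) y)" by (auto simp: cyl_def)
  ultimately obtain F where F: "finite F" "F \<subseteq> range (\<lambda>y. cyl (W y) y)" "UNIV \<subseteq> \<Union>F"
    unfolding compactin_def by (metis (no_types, lifting))
  then obtain Y where Y: "finite Y" "F = (\<lambda>y. cyl (W y) y) ` Y"
    by (meson finite_subset_image)
  have "h z = h z'" if zz': "\<forall>j \<in> \<Union>(W ` Y). z j = z' j" for z z'
  proof -
    obtain y where "y \<in> Y" "z \<in> cyl (W y) y" using F(3) Y(2) by blast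
    moreover from this have "z' \<in> cyl (W y) y" using zz' by (auto simp: cyl_def)
    ultimately show ?thesis using W(2) by metis
  qed
  then have "depends_only_on (\<Union>(W ` Y)) h" unfolding depends_only_on_def by blast
  moreover have "finite (\<Union>(W ` Y))" using Y(1) W(1) by blast
  ultimately show ?thesis by blast
qed

section \<open>Cellular automata\<close>

text \<open>Shifting by an arbitrary integer amount.  A cellular automaton commutes with every such shift,
  so it is determined by its local behaviour at coordinate 0.\<close>

definition sh :: "int \<Rightarrow> (int \<Rightarrow> 'a) \<Rightarrow> (int \<Rightarrow> 'a)" where
  "sh k x = (\<lambda>j. x (j + k))"

lemma id_CA: "id \<in> CA"
  by (simp add: CA_def)

lemma CA_shift: "c \<in> CA \<Longrightarrow> c (shift x) = shift (c x)"
  unfolding CA_def by (auto dest: fun_cong[where x = x])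

lemma CA_sh_nat: "c \<in> CA \<Longrightarrow> c (sh (int n) x) = sh (int n) (c x)"
proof (induction n arbitrary: x)
  case 0
  then show ?case by (simp add: sh_def)
next
  case (Suc n)
  have "sh (int (Suc n)) y = shift (sh (int n) y)" for y :: "int \<Rightarrow> 'a"
    by (auto simp: sh_def shift_def algebra_simps)
  then show ?case using Suc CA_shift by metis
qed

lemma CA_sh:
  assumes "c \<in> CA" shows "c (sh k x) = sh k (c x)"
proof (cases "k \<ge> 0")
  case True
  then show ?thesis using CA_sh_nat[OF assms, of "nat k"] by simp
next
  case False
  have "c x = c (sh (int (nat (- k))) (sh k x))" using False by (simp add: sh_def)
  also have "\<dots> = sh (int (nat (- k))) (c (sh k x))" by (rule CA_sh_nat[OF assms])
  finally show ?thesis using False by (simp add: sh_def fun_eq_iff)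
qed

lemma CA_coordinate: "c \<in> CA \<Longrightarrow> c x i = c (sh i x) 0"
  using CA_sh[of c i x] by (simp add: sh_def)

lemma CA_eqI:
  assumes "c \<in> CA" "d \<in> CA" "\<And>y. c y 0 = d y 0" shows "c = d"
  using CA_coordinate[OF assms(1)] CA_coordinate[OF assms(2)] assms(3) by (intro ext) metis

text \<open>Every cellular automaton has a finite-window local rule at coordinate 0 (the
  Curtis--Hedlund--Lyndon direction needed here).  There are only finitely many automata with a given
  window, so CA is countable.\<close>

lemma CA_coordinate_continuous:
  assumes "c \<in> CA"
  shows "continuous_map cantor_top (discrete_topology UNIV) (\<lambda>y. c y i)"
proof -
  have "continuous_map cantor_top (discrete_topology UNIV) (\<lambda>x::int \<Rightarrow> 'a. x i)"
    unfolding cantor_top_def by (rule continuous_map_product_projection) simp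
  then show ?thesis
    using assms continuous_map_compose[of cantor_top cantor_top c]
    by (auto simp: CA_def o_def)
qed

lemma CA_local_rule:
  "(c :: (int \<Rightarrow> 'a::finite) \<Rightarrow> _) \<in> CA \<Longrightarrow> \<exists>J. finite J \<and> depends_only_on J (\<lambda>y. c y 0)"
  by (rule uniform_window[OF CA_coordinate_continuous])

lemma countable_CA: "countable (CA :: ((int \<Rightarrow> 'a::finite) \<Rightarrow> (int \<Rightarrow> 'a)) set)"
proof -
  define CA_on where
    "CA_on J = {c \<in> (CA :: ((int \<Rightarrow> 'a) \<Rightarrow> _) set). depends_only_on J (\<lambda>y. c y 0)}" for J
  have finite_CA_on: "finite (CA_on J)" if J: "finite J" for J
  proof -
    let ?T = "range (window J :: (int \<Rightarrow> 'a) \<Rightarrow> _)"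
    have "inj_on (\<lambda>c. restrict (\<lambda>t. c t 0) ?T) (CA_on J)"
    proof (rule inj_onI)
      fix c d assume c: "c \<in> CA_on J" and d: "d \<in> CA_on J"
        and eq: "restrict (\<lambda>t. c t 0) ?T = restrict (\<lambda>t. d t 0) ?T"
      show "c = d"
      proof (rule CA_eqI)
        fix y
        have "c (window J y) 0 = d (window J y) 0" using fun_cong[OF eq, of "window J y"] by simp
        then show "c y 0 = d y 0"
          using c d by (simp add: CA_on_def depends_only_on_window[where h = "\<lambda>y. _ y 0"])
      qed (use c d in \<open>auto simp: CA_on_def\<close>)
    qed
    moreover have "(\<lambda>c. restrict (\<lambda>t. c t 0) ?T) ` CA_on J \<subseteq> Pi\<^sub>E ?T (\<lambda>_. UNIV)" by auto
    moreover have "finite (Pi\<^sub>E ?T (\<lambda>_. UNIV :: 'a set))"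
      using finite_range_window[OF J] by (intro finite_PiE) auto
    ultimately show ?thesis using inj_on_finite by blast
  qed
  have "CA = (\<Union>J \<in> Collect finite. CA_on J)"
    using CA_local_rule by (auto simp: CA_on_def)
  also have "countable \<dots>"
    by (rule countable_UN[OF countable_Collect_finite]) (simp add: finite_CA_on countable_finite)
  finally show ?thesis .
qed

section \<open>The pointwise topology\<close>

lemma topspace_pointwise [simp]: "topspace pointwise_top = CA"
proof -
  have "c \<in> U_sub x (c x 0)" if "c \<in> CA" for c and x :: "int \<Rightarrow> 'a"
    using that by (simp add: U_sub_def)
  then show ?thesis
    unfolding pointwise_top_def topology_generated_by_topspace by (auto simp: U_sub_def)
qed

lemma openin_U_sub: "openin pointwise_top (U_sub x a)"
  unfolding pointwise_top_def by (rule topology_generated_by_Basis) blast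

text \<open>The subbasic sets are clopen: their complement is a union of subbasic sets.\<close>

lemma closedin_U_sub: "closedin pointwise_top (U_sub x a)"
proof -
  have "CA - U_sub x a = (\<Union>b \<in> - {a}. U_sub x b)" by (auto simp: U_sub_def)
  moreover have "openin pointwise_top (\<Union>b \<in> - {a}. U_sub x b)"
    by (auto intro!: openin_Union openin_U_sub)
  ultimately show ?thesis by (simp add: closedin_def U_sub_def)
qed

definition basic_nbhd ::
    "((int \<Rightarrow> 'a) \<Rightarrow> (int \<Rightarrow> 'a)) \<Rightarrow> (int \<Rightarrow> 'a) set \<Rightarrow> ((int \<Rightarrow> 'a) \<Rightarrow> (int \<Rightarrow> 'a)) set"
  where "basic_nbhd c P = {d \<in> CA. \<forall>x \<in> P. d x 0 = c x 0}"

lemma basic_nbhd_self: "c \<in> CA \<Longrightarrow> c \<in> basic_nbhd c P"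
  by (simp add: basic_nbhd_def)

lemma basic_nbhd_clopen:
  assumes "finite P"
  shows "openin pointwise_top (basic_nbhd c P) \<and> closedin pointwise_top (basic_nbhd c P)"
  using assms
proof (induction P rule: finite_induct)
  case empty
  then show ?case by (simp add: basic_nbhd_def flip: topspace_pointwise)
next
  case (insert x P)
  have "basic_nbhd c (insert x P) = U_sub x (c x 0) \<inter> basic_nbhd c P"
    by (auto simp: basic_nbhd_def U_sub_def)
  then show ?case
    using insert.IH by (simp add: openin_Int closedin_Int openin_U_sub closedin_U_sub)
qed

lemma basic_nbhd_base:
  assumes "openin pointwise_top U" "d \<in> U"
  shows "\<exists>P. finite P \<and> basic_nbhd d P \<subseteq> U"
proof -
  have "generate_topology_on {U_sub x a | x a. True} U"
    using assms(1) unfolding pointwise_top_def by (rule openin_topology_generated_by)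
  then have "\<forall>d \<in> U. \<exists>P. finite P \<and> basic_nbhd d P \<subseteq> U"
  proof (induction rule: generate_topology_on.induct)
    case (Int U V)
    show ?case
    proof
      fix d assume "d \<in> U \<inter> V"
      then obtain P Q where "finite P" "basic_nbhd d P \<subseteq> U" "finite Q" "basic_nbhd d Q \<subseteq> V"
        using Int.IH by blast
      then have "finite (P \<union> Q) \<and> basic_nbhd d (P \<union> Q) \<subseteq> U \<inter> V"
        by (auto simp: basic_nbhd_def)
      then show "\<exists>P. finite P \<and> basic_nbhd d P \<subseteq> U \<inter> V" by blast
    qed
  next
    case (UN K)
    then show ?case by (meson UnionE UnionI subsetD subsetI)
  next
    case (Basis S)
    then obtain x a where "S = U_sub x a" by blast
    then have "basic_nbhd d {x} \<subseteq> S" if "d \<in> S" for d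
      using that by (auto simp: basic_nbhd_def U_sub_def)
    then show ?case by blast
  qed simp
  then show ?thesis using assms(2) by blast
qed

lemma CA_clopen_separated:
  assumes "c \<in> CA" "d \<in> CA" "c \<noteq> d"
  shows "\<exists>U. openin pointwise_top U \<and> closedin pointwise_top U \<and> c \<in> U \<and> d \<notin> U"
proof -
  obtain y where "c y 0 \<noteq> d y 0" using CA_eqI assms by blast
  then have "c \<in> U_sub y (c y 0)" "d \<notin> U_sub y (c y 0)" using assms by (auto simp: U_sub_def)
  then show ?thesis using openin_U_sub[of y "c y 0"] closedin_U_sub[of y "c y 0"] by blast
qed

lemma pointwise_zero_dimensional: "pointwise_top dim_le 0"
  unfolding dimension_le_0_neighbourhood_base_of_clopen neighbourhood_base_of
proof (intro allI impI)
  fix W c assume W: "openin pointwise_top W \<and> c \<in> W"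
  then obtain P where P: "finite P" "basic_nbhd c P \<subseteq> W"
    using basic_nbhd_base by blast
  have "c \<in> CA" using W openin_subset by fastforce
  then show "\<exists>U V. openin pointwise_top U \<and> (closedin pointwise_top V \<and> openin pointwise_top V) \<and>
                   c \<in> U \<and> U \<subseteq> V \<and> V \<subseteq> W"
    using basic_nbhd_clopen[OF P(1)] basic_nbhd_self[of c P] P(2) by blast
qed

lemma limitin_pointwise_eventually:
  assumes "limitin pointwise_top s l sequentially"
  shows "\<forall>\<^sub>F n in sequentially. s n x 0 = l x 0"
proof -
  have "l \<in> U_sub x (l x 0)" using assms by (simp add: limitin_def U_sub_def)
  then have "\<forall>\<^sub>F n in sequentially. s n \<in> U_sub x (l x 0)"
    using assms openin_U_sub[of x "l x 0"] unfolding limitin_def by blast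
  then show ?thesis by (rule eventually_mono) (simp add: U_sub_def)
qed

section \<open>Local modifications and neighbourhood bases\<close>

definition modify_on ::
    "('a \<Rightarrow> 'a) \<Rightarrow> ((int \<Rightarrow> 'a) \<Rightarrow> (int \<Rightarrow> 'a)) \<Rightarrow> (int \<Rightarrow> 'a) set \<Rightarrow> (int \<Rightarrow> 'a) \<Rightarrow> (int \<Rightarrow> 'a)"
  where "modify_on f c S y = (\<lambda>i. if sh i y \<in> S then f (c y i) else c y i)"

lemma modify_on_at_0: "modify_on f c S x 0 = (if x \<in> S then f (c x 0) else c x 0)"
  by (simp add: modify_on_def sh_def)

lemma modify_on_CA:
  assumes c: "c \<in> CA" and J: "finite J" and S: "depends_only_on J (\<lambda>y. y \<in> S)"
  shows "modify_on f c S \<in> CA"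
proof -
  have "continuous_map cantor_top (discrete_topology UNIV) (\<lambda>y. modify_on f c S y i)" for i
  proof (rule continuous_if_locally_constant)
    fix y
    obtain Jc where Jc: "finite Jc" "\<And>z. z \<in> cyl Jc y \<Longrightarrow> c z i = c y i"
      using locally_constant_if_continuous[OF CA_coordinate_continuous[OF c, of i], of y] by blast
    have "modify_on f c S z i = modify_on f c S y i" if z: "z \<in> cyl (Jc \<union> (\<lambda>j. j + i) ` J) y" for z
    proof -
      have "\<forall>j\<in>J. sh i z j = sh i y j" using z by (auto simp: cyl_def sh_def)
      then have "sh i z \<in> S \<longleftrightarrow> sh i y \<in> S"
        using S unfolding depends_only_on_def by blast
      moreover have "c z i = c y i" using z by (intro Jc(2)) (simp add: cyl_def)
      ultimately show ?thesis by (simp add: modify_on_def)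
    qed
    then show "\<exists>J'. finite J' \<and> (\<forall>z \<in> cyl J' y. modify_on f c S z i = modify_on f c S y i)"
      using Jc(1) J by (intro exI[of _ "Jc \<union> (\<lambda>j. j + i) ` J"]) simp
  qed
  then have "continuous_map cantor_top cantor_top (modify_on f c S)"
    by (simp add: cantor_top_def continuous_map_componentwise_UNIV)
  moreover have "modify_on f c S (shift y) = shift (modify_on f c S y)" for y
  proof -
    have "sh i (\<lambda>j. y (j + 1)) = sh (i + 1) y" for i by (auto simp: sh_def algebra_simps)
    moreover have "c (shift y) i = c y (i + 1)" for i using CA_shift[OF c] by (simp add: shift_def)
    ultimately show ?thesis by (intro ext) (simp add: modify_on_def shift_def)
  qed
  ultimately show ?thesis by (auto simp: CA_def fun_eq_iff)
qed

lemma fixpoint_free_map: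
  assumes "CARD('a::finite) \<ge> 2" shows "\<exists>f :: 'a \<Rightarrow> 'a. \<forall>x. f x \<noteq> x"
proof -
  obtain a b :: 'a where "a \<noteq> b"
    using assms by (metis UNIV_I card_le_Suc0_iff_eq finite not_less_eq_eq numeral_2_eq_2)
  then show ?thesis by (intro exI[of _ "\<lambda>x. if x = a then b else a"]) auto
qed

lemma uncountable_configurations:
  assumes "CARD('a::finite) \<ge> 2" shows "uncountable (UNIV :: (int \<Rightarrow> 'a) set)"
proof
  assume "countable (UNIV :: (int \<Rightarrow> 'a) set)"
  then have enum: "range (from_nat_into UNIV) = (UNIV :: (int \<Rightarrow> 'a) set)"
    by (simp add: range_from_nat_into)
  obtain f :: "'a \<Rightarrow> 'a" where f: "\<And>x. f x \<noteq> x" using fixpoint_free_map[OF assms] by blast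
  define z :: "int \<Rightarrow> 'a" where "z j = f (from_nat_into UNIV (nat j) j)" for j
  obtain n where "z = from_nat_into UNIV n" using enum by (metis UNIV_I imageE)
  then have "z (int n) = from_nat_into UNIV n (int n)" by simp
  then show False using f by (simp add: z_def)
qed

text \<open>Use a cylinder around z that
  avoids every element of Q.\<close>

lemma perturbation:
  assumes card: "CARD('a::finite) \<ge> 2"
    and c: "(c :: (int \<Rightarrow> 'a) \<Rightarrow> _) \<in> CA" and Q: "finite Q" and z: "z \<notin> Q"
  shows "\<exists>d \<in> basic_nbhd c Q. d z 0 \<noteq> c z 0"
proof -
  obtain f :: "'a \<Rightarrow> 'a" where f: "\<And>x. f x \<noteq> x" using fixpoint_free_map[OF card] by blast
  have "\<forall>q \<in> Q. \<exists>j. q j \<noteq> z j" using z by (metis ext)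
  then obtain jq where jq: "\<And>q. q \<in> Q \<Longrightarrow> q (jq q) \<noteq> z (jq q)" by metis
  define d where "d = modify_on f c (cyl (jq ` Q) z)"
  have "d \<in> CA" unfolding d_def
    using Q by (intro modify_on_CA[OF c, of "jq ` Q"]) (auto simp: depends_only_on_def cyl_def)
  moreover have "d q 0 = c q 0" if "q \<in> Q" for q
    using jq[OF that] that by (auto simp: d_def modify_on_at_0 cyl_def)
  moreover have "d z 0 \<noteq> c z 0" using f by (simp add: d_def modify_on_at_0 cyl_def)
  ultimately show ?thesis by (auto simp: basic_nbhd_def)
qed

text \<open>No automaton has a countable neighbourhood basis: the countably many finite sets
  describing the basis miss some configuration z, and the neighbourhood fixing the value at z contains
  no member of the basis by the perturbation lemma.\<close>

lemma no_countable_nbhd_basis: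
  assumes card: "CARD('a::finite) \<ge> 2" and c: "(c :: (int \<Rightarrow> 'a) \<Rightarrow> _) \<in> CA"
  shows "\<not> countable_nbhd_basis_at pointwise_top c"
proof
  assume "countable_nbhd_basis_at pointwise_top c"
  then obtain B where B: "countable B" "\<And>N. N \<in> B \<Longrightarrow> c \<in> pointwise_top interior_of N"
    "\<And>V. V \<subseteq> CA \<Longrightarrow> c \<in> pointwise_top interior_of V \<Longrightarrow> \<exists>N \<in> B. N \<subseteq> V"
    unfolding countable_nbhd_basis_at_def by auto
  have "\<exists>P. finite P \<and> basic_nbhd c P \<subseteq> N" if N: "N \<in> B" for N
  proof -
    obtain P where "finite P" "basic_nbhd c P \<subseteq> pointwise_top interior_of N"
      using basic_nbhd_base[OF openin_interior_of B(2)[OF N]] by blast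
    then show ?thesis using interior_of_subset[of pointwise_top N] by blast
  qed
  then obtain P where P: "\<And>N. N \<in> B \<Longrightarrow> finite (P N) \<and> basic_nbhd c (P N) \<subseteq> N" by metis
  have "countable (\<Union>N \<in> B. P N)" using B(1) P by (simp add: countable_finite)
  then obtain z where z: "z \<notin> (\<Union>N \<in> B. P N)"
    using uncountable_configurations[OF card] by (metis UNIV_eq_I)
  let ?V = "U_sub z (c z 0)"
  have "c \<in> pointwise_top interior_of ?V"
    using c by (simp add: interior_of_openin[OF openin_U_sub]) (simp add: U_sub_def)
  moreover have "?V \<subseteq> CA" by (auto simp: U_sub_def)
  ultimately obtain N where N: "N \<in> B" "N \<subseteq> ?V" using B(3) by blast
  moreover have "finite (P N)" "z \<notin> P N" using P[OF N(1)] z N(1) by auto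
  ultimately obtain d where "d \<in> basic_nbhd c (P N)" "d z 0 \<noteq> c z 0"
    using perturbation[OF card c] by blast
  then show False using P[OF N(1)] N(2) by (auto simp: U_sub_def)
qed

lemma pointwise_no_isolated_points:
  assumes "CARD('a::finite) \<ge> 2"
  shows "no_isolated_points (pointwise_top :: ((int \<Rightarrow> 'a) \<Rightarrow> (int \<Rightarrow> 'a)) topology)"
proof -
  have "\<not> openin pointwise_top {c}" if "c \<in> CA" for c :: "(int \<Rightarrow> 'a) \<Rightarrow> (int \<Rightarrow> 'a)"
    using no_countable_nbhd_basis[OF assms that] countable_nbhd_basis_if_isolated[of pointwise_top c] by blast
  then show ?thesis by (simp add: no_isolated_points_def)
qed

section \<open>The Bernoulli measure\<close>

definition bernoulli :: "(int \<Rightarrow> 'a::finite) measure" where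
  "bernoulli = PiM UNIV (\<lambda>_. measure_pmf (pmf_of_set UNIV))"

lemma space_bernoulli [simp]: "space bernoulli = UNIV"
  by (simp add: bernoulli_def space_PiM)

lemma prob_space_bernoulli: "prob_space bernoulli"
  unfolding bernoulli_def by (rule prob_space_PiM) (simp add: prob_space_measure_pmf)

lemma cyl_prod_emb:
  "cyl J w = prod_emb UNIV (\<lambda>_. measure_pmf (pmf_of_set UNIV)) J (Pi\<^sub>E J (\<lambda>j. {w j}))"
  by (auto simp: cyl_def prod_emb_def PiE_iff)

lemma cyl_sets: "finite J \<Longrightarrow> cyl J w \<in> sets (bernoulli :: (int \<Rightarrow> 'a::finite) measure)"
  unfolding cyl_prod_emb bernoulli_def by (rule sets_PiM_I) auto

lemma measure_cyl:
  assumes "finite J"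
  shows "measure (bernoulli :: (int \<Rightarrow> 'a::finite) measure) (cyl J w) = (1 / CARD('a)) ^ card J"
proof -
  have "emeasure (bernoulli :: (int \<Rightarrow> 'a) measure) (cyl J w) =
        (\<Prod>j\<in>J. emeasure (measure_pmf (pmf_of_set UNIV)) {w j})"
    unfolding cyl_prod_emb bernoulli_def
    by (rule emeasure_PiM_emb) (auto simp: prob_space_measure_pmf assms)
  also have "\<dots> = ennreal ((1 / CARD('a)) ^ card J)"
    by (simp add: emeasure_pmf_single ennreal_power)
  finally show ?thesis by (simp add: measure_def)
qed

text \<open>Sets decided by a finite window are finite unions of cylinders, hence measurable; in
  particular so is the set where two automata disagree at coordinate 0.\<close>

lemma sets_if_depends_only_on:
  assumes "finite J" "depends_only_on J (\<lambda>y. y \<in> S)"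
  shows "S \<in> sets (bernoulli :: (int \<Rightarrow> 'a::finite) measure)"
proof -
  have "S = (\<Union>t \<in> window J ` S. cyl J t)"
  proof
    show "S \<subseteq> (\<Union>t \<in> window J ` S. cyl J t)" using window_in_cyl by blast
    show "(\<Union>t \<in> window J ` S. cyl J t) \<subseteq> S"
    proof
      fix y assume "y \<in> (\<Union>t \<in> window J ` S. cyl J t)"
      then obtain s where "s \<in> S" "\<forall>j\<in>J. y j = s j" by (auto simp: cyl_def window_def)
      then show "y \<in> S" using assms(2) unfolding depends_only_on_def by blast
    qed
  qed
  also have "\<dots> \<in> sets bernoulli"
  proof (intro sets.finite_UN)
    show "finite (window J ` S)"
      using finite_range_window[OF assms(1)] by (rule finite_subset[rotated]) auto
  qed (simp add: cyl_sets assms(1))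
  finally show ?thesis .
qed

text \<open>The excess sets form a decreasing sequence with empty intersection.\<close>

lemma (in prob_space) prob_ge_if_eventually_contained:
  assumes A: "\<And>n. A n \<in> events" and B: "B \<in> events"
    and ev: "\<And>x. \<forall>\<^sub>F n in sequentially. x \<in> A n \<longrightarrow> x \<in> B"
    and r: "\<And>n. r \<le> prob (A n)"
  shows "r \<le> prob B"
proof -
  define F where "F N = (\<Union>n. A (N + n) - B)" for N
  have F: "F N \<in> events" for N using A B by (auto simp: F_def)
  have "decseq F"
    by (rule decseq_SucI) (auto simp: F_def, metis add_Suc_shift add_Suc_right)
  moreover have "(\<Inter>N. F N) = {}"
  proof (intro equals0I)
    fix x assume x: "x \<in> (\<Inter>N. F N)"
    obtain N where "\<And>n. n \<ge> N \<Longrightarrow> x \<in> A n \<longrightarrow> x \<in> B"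
      using ev[of x] unfolding eventually_sequentially by blast
    then have "x \<notin> F N" by (auto simp: F_def)
    then show False using x by blast
  qed
  ultimately have "(\<lambda>N. prob (F N)) \<longlonglongrightarrow> 0"
    using Lim_measure_decseq[of F M] F by (auto simp: emeasure_finite)
  then have "(\<lambda>N. prob B + prob (F N)) \<longlonglongrightarrow> prob B + 0"
    by (intro tendsto_add tendsto_const)
  moreover have "r \<le> prob B + prob (F N)" for N
  proof -
    have "A N - B \<subseteq> F N"
      unfolding F_def using UN_upper[of 0 UNIV "\<lambda>n. A (N + n) - B"] by simp
    then have "A N \<subseteq> B \<union> F N" by blast
    then have "prob (A N) \<le> prob (B \<union> F N)" using B F by (intro finite_measure_mono) auto
    also have "\<dots> \<le> prob B + prob (F N)" using B F by (intro measure_Un_le) auto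
    finally show ?thesis using r order_trans by blast
  qed
  ultimately show ?thesis by (simp add: LIMSEQ_le_const)
qed

section \<open>Failure of sequentiality\<close>

text \<open>The automata disagreeing with the identity at coordinate 0 on a set of measure at least
  one half are the witnesses for non-sequentiality: this set is sequentially closed, but not closed,
  since every basic neighbourhood of the identity contains such an automaton.\<close>

definition disagreement :: "((int \<Rightarrow> 'a) \<Rightarrow> (int \<Rightarrow> 'a)) \<Rightarrow> (int \<Rightarrow> 'a) set" where
  "disagreement d = {x. d x 0 \<noteq> x 0}"

definition heavy :: "((int \<Rightarrow> 'a::finite) \<Rightarrow> (int \<Rightarrow> 'a)) set" where
  "heavy = {d \<in> CA. 1/2 \<le> measure bernoulli (disagreement d)}"

lemma disagreement_sets:
  assumes "d \<in> CA" shows "disagreement d \<in> sets bernoulli"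
proof -
  obtain J where "finite J" and J: "depends_only_on J (\<lambda>y. d y 0)"
    using CA_local_rule assms by blast
  moreover have "depends_only_on {0} (\<lambda>y. y 0)" by (simp add: depends_only_on_def)
  ultimately have "depends_only_on (J \<union> {0}) (\<lambda>y. d y 0 \<noteq> y 0)"
    by (intro depends_only_on_Un[where F = "(\<noteq>)"])
  then show ?thesis using \<open>finite J\<close> by (intro sets_if_depends_only_on) (simp_all add: disagreement_def)
qed

lemma heavy_sequentially_closed: "sequentially_closedin pointwise_top heavy"
  unfolding sequentially_closedin_def
proof (intro conjI allI impI)
  show "heavy \<subseteq> topspace pointwise_top" by (auto simp: heavy_def)
  fix s l assume "(\<forall>n. s n \<in> heavy) \<and> limitin pointwise_top s l sequentially"
  then have s: "\<And>n. s n \<in> CA" "\<And>n. 1/2 \<le> measure bernoulli (disagreement (s n))"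
    and lim: "limitin pointwise_top s l sequentially"
    by (auto simp: heavy_def)
  have l: "l \<in> CA" using lim by (simp add: limitin_def)
  interpret prob_space bernoulli by (rule prob_space_bernoulli)
  have "1/2 \<le> prob (disagreement l)"
  proof (rule prob_ge_if_eventually_contained)
    fix x
    show "\<forall>\<^sub>F n in sequentially. x \<in> disagreement (s n) \<longrightarrow> x \<in> disagreement l"
      using limitin_pointwise_eventually[OF lim, of x] by (rule eventually_mono) (simp add: disagreement_def)
  qed (use s l disagreement_sets in auto)
  then show "l \<in> heavy" using l by (simp add: heavy_def)
qed

lemma small_cylinder_union:
  assumes card: "CARD('a::finite) \<ge> 2" and P: "finite (P :: (int \<Rightarrow> 'a) set)"
  shows "measure bernoulli (\<Union>p \<in> P. cyl {0..int (card P)} p) \<le> 1/2"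
proof -
  let ?m = "card P"
  have "measure bernoulli (\<Union>p \<in> P. cyl {0..int ?m} p) \<le> (\<Sum>p \<in> P. measure bernoulli (cyl {0..int ?m} p))"
    using P cyl_sets by (intro measure_UNION_le) auto
  also have "\<dots> = ?m * (1 / CARD('a)) ^ Suc ?m"
    by (simp add: measure_cyl nat_add_distrib)
  also have "\<dots> \<le> ?m * (1 / 2) ^ Suc ?m"
    using card by (intro mult_left_mono power_mono) (auto simp: field_simps)
  also have "\<dots> \<le> 1 / 2"
  proof -
    have "real ?m \<le> 2 ^ ?m" using less_exp[of ?m] by (metis of_nat_le_iff of_nat_numeral of_nat_power less_imp_le)
    then show ?thesis by (simp add: field_simps)
  qed
  finally show ?thesis .
qed

text \<open>Every basic neighbourhood of the identity, given by a finite set P, contains a heavy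
  automaton: modify the identity outside the cylinders of length card P + 1 around the points of P.\<close>

lemma heavy_not_closed:
  assumes card: "CARD('a::finite) \<ge> 2"
  shows "\<not> closedin pointwise_top (heavy :: ((int \<Rightarrow> 'a) \<Rightarrow> _) set)"
proof
  let ?H = "heavy :: ((int \<Rightarrow> 'a) \<Rightarrow> _) set"
  assume "closedin pointwise_top ?H"
  then have "openin pointwise_top (CA - ?H)" by (simp add: closedin_def)
  moreover have "id \<in> CA - ?H" using id_CA by (simp add: heavy_def disagreement_def)
  ultimately obtain P where P: "finite P" "basic_nbhd id P \<subseteq> CA - ?H"
    using basic_nbhd_base by blast
  obtain f :: "'a \<Rightarrow> 'a" where f: "\<And>x. f x \<noteq> x" using fixpoint_free_map[OF card] by blast
  define J where "J = {0..int (card P)}"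
  define S where "S = - (\<Union>p \<in> P. cyl J p)"
  define d where "d = modify_on f id S"
  have "d \<in> CA" unfolding d_def
    by (rule modify_on_CA[OF id_CA, of J]) (auto simp: J_def S_def depends_only_on_def cyl_def)
  moreover have "d p 0 = p 0" if "p \<in> P" for p
    using that by (auto simp: d_def modify_on_at_0 S_def cyl_def)
  ultimately have "d \<in> basic_nbhd id P" by (simp add: basic_nbhd_def)
  moreover have "d \<in> ?H"
  proof -
    interpret prob_space bernoulli by (rule prob_space_bernoulli)
    have U: "(\<Union>p \<in> P. cyl J p) \<in> events" using P(1) cyl_sets by (auto simp: J_def)
    have "disagreement d = space bernoulli - (\<Union>p \<in> P. cyl J p)"
      using f by (auto simp: disagreement_def d_def modify_on_at_0 S_def)
    then have "prob (disagreement d) = 1 - prob (\<Union>p \<in> P. cyl J p)"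
      using prob_compl[OF U] by simp
    then show ?thesis
      using small_cylinder_union[OF card P(1)] \<open>d \<in> CA\<close> by (simp add: heavy_def J_def)
  qed
  ultimately show False using P(2) by blast
qed

lemma not_sequential_space:
  assumes "CARD('a::finite) \<ge> 2"
  shows "\<not> sequential_space (pointwise_top :: ((int \<Rightarrow> 'a) \<Rightarrow> (int \<Rightarrow> 'a)) topology)"
  using heavy_sequentially_closed heavy_not_closed[OF assms]
  unfolding sequential_space_def by blast

theorem theorem3p4:
  assumes "CARD('a::finite) \<ge> 2"
  shows "countable (CA :: ((int \<Rightarrow> 'a) \<Rightarrow> (int \<Rightarrow> 'a)) set)
    \<and> topspace (pointwise_top :: ((int \<Rightarrow> 'a) \<Rightarrow> (int \<Rightarrow> 'a)) topology) = CA
    \<and> Hausdorff_space (pointwise_top :: ((int \<Rightarrow> 'a) \<Rightarrow> (int \<Rightarrow> 'a)) topology)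
    \<and> \<not> compact_space (pointwise_top :: ((int \<Rightarrow> 'a) \<Rightarrow> (int \<Rightarrow> 'a)) topology)
    \<and> no_isolated_points (pointwise_top :: ((int \<Rightarrow> 'a) \<Rightarrow> (int \<Rightarrow> 'a)) topology)
    \<and> totally_disconnected_space (pointwise_top :: ((int \<Rightarrow> 'a) \<Rightarrow> (int \<Rightarrow> 'a)) topology)
    \<and> first_category (pointwise_top :: ((int \<Rightarrow> 'a) \<Rightarrow> (int \<Rightarrow> 'a)) topology)
    \<and> (\<forall>c \<in> (CA :: ((int \<Rightarrow> 'a) \<Rightarrow> (int \<Rightarrow> 'a)) set).
          \<not> countable_nbhd_basis_at pointwise_top c)
    \<and> \<not> first_countable (pointwise_top :: ((int \<Rightarrow> 'a) \<Rightarrow> (int \<Rightarrow> 'a)) topology)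
    \<and> \<not> metrizable_space (pointwise_top :: ((int \<Rightarrow> 'a) \<Rightarrow> (int \<Rightarrow> 'a)) topology)
    \<and> \<not> second_countable (pointwise_top :: ((int \<Rightarrow> 'a) \<Rightarrow> (int \<Rightarrow> 'a)) topology)
    \<and> normal_space (pointwise_top :: ((int \<Rightarrow> 'a) \<Rightarrow> (int \<Rightarrow> 'a)) topology)
    \<and> \<not> sequential_space (pointwise_top :: ((int \<Rightarrow> 'a) \<Rightarrow> (int \<Rightarrow> 'a)) topology)"
proof -
  let ?X = "pointwise_top :: ((int \<Rightarrow> 'a) \<Rightarrow> (int \<Rightarrow> 'a)) topology"
  have countable: "countable (topspace ?X)" by (simp add: countable_CA)
  have Hausdorff: "Hausdorff_space ?X"
    by (rule Hausdorff_space_if_clopen_separated) (simp add: CA_clopen_separated)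
  have perfect: "no_isolated_points ?X" by (rule pointwise_no_isolated_points[OF assms])
  have no_basis: "\<forall>c \<in> CA. \<not> countable_nbhd_basis_at ?X c"
    using no_countable_nbhd_basis[OF assms] by blast
  have not_first_countable: "\<not> first_countable ?X"
    using countable_nbhd_basis_if_first_countable no_basis id_CA by fastforce
  have "normal_space ?X"
    using zero_dimensional_imp_regular_space[OF pointwise_zero_dimensional]
      countable_imp_Lindelof_space[OF countable] by (rule regular_Lindelof_imp_normal_space)
  moreover have "\<not> compact_space ?X"
    using not_compact_if_countable_perfect[OF countable Hausdorff perfect] id_CA by auto
  moreover have "totally_disconnected_space ?X"
    by (rule totally_disconnected_if_clopen_separated) (simp add: CA_clopen_separated)
  moreover have "first_category ?X"
    using first_category_if_countable_perfect[OF countable Hausdorff_imp_t1_space[OF Hausdorff] perfect] .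
  ultimately show ?thesis
    using countable Hausdorff perfect no_basis not_first_countable not_sequential_space[OF assms]
      metrizable_imp_first_countable second_countable_imp_first_countable
    by auto
qed

end
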